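(* Let $k$ and $n$ be positive integers. Any two $n$-vertex graphs whose components are all cycles with at least $k+1$ vertices have identical $k$-decks.
   Context: The $k$-deck $\mathcal{D}_k(G)$ of a graph $G$ is the multiset of isomorphism classes of the induced subgraphs of $G$ on $k$ vertices. *)

theory Defs
  imports "HOL-Library.Multiset"
begin

type_synonym 'a graph = "'a set \<times> ('a \<times> 'a) set"

definition simple_graph :: "'a graph \<Rightarrow> bool" where
  "simple_graph G \<longleftrightarrow> finite (fst G) \<and> snd G \<subseteq> fst G \<times> fst G \<and> sym (snd G)
     \<and> (\<forall>x. (x, x) \<notin> snd G)"

definition graph_iso :: "'a graph \<Rightarrow> 'b graph \<Rightarrow> bool" where
  "graph_iso G H \<longleftrightarrow> (\<exists>f. bij_betw f (fst G) (fst H) \<and>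
     (\<forall>x\<in>fst G. \<forall>y\<in>fst G. (x, y) \<in> snd G \<longleftrightarrow> (f x, f y) \<in> snd H))"

definition induced :: "'a graph \<Rightarrow> 'a set \<Rightarrow> 'a graph" where
  "induced G S = (S, snd G \<inter> (S \<times> S))"

text \<open>Isomorphism class of a graph, represented as the set of all isomorphic graphs
  on natural-number vertices (every finite graph has such a copy).\<close>
definition iso_class :: "'a graph \<Rightarrow> nat graph set" where
  "iso_class G = {H. graph_iso H G}"

definition deck :: "nat \<Rightarrow> 'a graph \<Rightarrow> nat graph set multiset" where
  "deck k G = image_mset (\<lambda>S. iso_class (induced G S))
                (mset_set {S. S \<subseteq> fst G \<and> card S = k})"

definition cycle_graph :: "nat \<Rightarrow> nat graph" where
  "cycle_graph m = ({0..<m}, {(i, j). i < m \<and> j < m \<and> (j = (i + 1) mod m \<or> i = (j + 1) mod m)})"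

definition is_cycle :: "'a graph \<Rightarrow> bool" where
  "is_cycle G \<longleftrightarrow> card (fst G) \<ge> 3 \<and> graph_iso G (cycle_graph (card (fst G)))"

definition components :: "'a graph \<Rightarrow> 'a set set" where
  "components G = (\<lambda>x. {y \<in> fst G. (x, y) \<in> (snd G)\<^sup>*}) ` fst G"

definition all_components_long_cycles :: "nat \<Rightarrow> 'a graph \<Rightarrow> bool" where
  "all_components_long_cycles k G \<longleftrightarrow>
     (\<forall>C\<in>components G. is_cycle (induced G C) \<and> card C \<ge> k + 1)"

end

theory Submission
  imports Defs "HOL-Library.FuncSet"
begin

text \<open>Every graph whose components are cycles of length greater than \<open>k\<close> is isomorphic to a
  disjoint union \<open>cycle_union ms\<close> of cycles of lengths \<open>ms\<close>. A homomorphism from a pattern graph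
  on \<open>j \<le> k\<close> vertices into a cycle of length \<open>m > j\<close> misses a vertex of the cycle, so it lifts
  to the path obtained by cutting the cycle there. Hence a homomorphism into a union of long
  cycles is determined by the images of one root per pattern component together with the integer
  lifts, and any bijection between the vertex sets of two such unions transports homomorphisms
  bijectively: the number of homomorphisms from any pattern on at most \<open>k\<close> vertices depends only
  on the number of vertices. Moebius inversion over the partitions of the pattern's vertices turns
  homomorphism counts into counts of injective homomorphisms, inversion over edge supersets turns
  these into counts of induced embeddings, and dividing by the number of automorphisms of the
  pattern gives the multiplicity of each isomorphism class in the \<open>k\<close>-deck.\<close>

section \<open>Disjoint unions of cycles\<close>

definition cycle_union_verts :: "nat list \<Rightarrow> (nat \<times> nat) set" where
  "cycle_union_verts ms = Sigma {..<length ms} (\<lambda>c. {..<ms ! c})"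

definition cycle_union_edges :: "nat list \<Rightarrow> ((nat \<times> nat) \<times> (nat \<times> nat)) set" where
  "cycle_union_edges ms = {((c, i), (c', i')). c < length ms \<and> i < ms ! c \<and> c' = c \<and> i' < ms ! c \<and>
      (i' = Suc i mod ms ! c \<or> i = Suc i' mod ms ! c)}"

definition cycle_union :: "nat list \<Rightarrow> (nat \<times> nat) graph" where
  "cycle_union ms = (cycle_union_verts ms, cycle_union_edges ms)"

lemma mem_cycle_union_verts: "(c, i) \<in> cycle_union_verts ms \<longleftrightarrow> c < length ms \<and> i < ms ! c"
  by (auto simp: cycle_union_verts_def)

lemma finite_cycle_union_verts: "finite (cycle_union_verts ms)"
  by (auto simp: cycle_union_verts_def)

lemma cycle_union_edges_iff:
  "((c, a), (c', b)) \<in> cycle_union_edges ms \<longleftrightarrow>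
     c' = c \<and> c < length ms \<and> (a, b) \<in> snd (cycle_graph (ms ! c))"
  by (auto simp: cycle_union_edges_def cycle_graph_def)

definition long_cycles :: "nat \<Rightarrow> nat list \<Rightarrow> bool" where
  "long_cycles j ms \<longleftrightarrow> (\<forall>c<length ms. 3 \<le> ms ! c \<and> j < ms ! c)"

lemma long_cycles_mono: "long_cycles k ms \<Longrightarrow> j \<le> k \<Longrightarrow> long_cycles j ms"
  by (auto simp: long_cycles_def)

lemma long_cycles_lengths:
  assumes "long_cycles j ms"
  shows "\<forall>c<length ms. j < ms ! c" and "\<forall>c<length ms. 2 < ms ! c"
  using assms by (auto simp: long_cycles_def)

definition cycle_shift :: "nat list \<Rightarrow> nat \<times> nat \<Rightarrow> int \<Rightarrow> nat \<times> nat" where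
  "cycle_shift ms v a = (fst v, nat ((int (snd v) + a) mod int (ms ! fst v)))"

lemma fst_cycle_shift [simp]: "fst (cycle_shift ms v a) = fst v"
  by (simp add: cycle_shift_def)

lemma cycle_shift_0: "v \<in> cycle_union_verts ms \<Longrightarrow> cycle_shift ms v 0 = v"
  by (cases v) (auto simp: cycle_shift_def mem_cycle_union_verts)

lemma cycle_shift_add:
  assumes "v \<in> cycle_union_verts ms"
  shows "cycle_shift ms (cycle_shift ms v a) b = cycle_shift ms v (a + b)"
proof (cases v)
  case (Pair c i)
  then have "ms ! c > 0" using assms by (auto simp: mem_cycle_union_verts)
  then have "int (nat ((int i + a) mod int (ms ! c))) = (int i + a) mod int (ms ! c)"
    by simp
  then show ?thesis using Pair by (simp add: cycle_shift_def mod_add_left_eq add.assoc)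
qed

lemma cycle_shift_in_verts: "v \<in> cycle_union_verts ms \<Longrightarrow> cycle_shift ms v a \<in> cycle_union_verts ms"
  by (cases v) (auto simp: cycle_shift_def mem_cycle_union_verts nat_less_iff)

lemma mod_add_left_cancel:
  fixes i a b m :: int
  shows "(i + a) mod m = (i + b) mod m \<longleftrightarrow> a mod m = b mod m"
  by (metis minus_add_cancel mod_add_right_eq)

lemma cycle_shift_eq_iff:
  assumes "v \<in> cycle_union_verts ms"
  shows "cycle_shift ms v a = cycle_shift ms v b \<longleftrightarrow> a mod int (ms ! fst v) = b mod int (ms ! fst v)"
proof (cases v)
  case (Pair c i)
  then have "ms ! c > 0" using assms by (auto simp: mem_cycle_union_verts)
  then show ?thesis
    using Pair by (simp add: cycle_shift_def eq_nat_nat_iff mod_add_left_cancel)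
qed

lemma cycle_shift_unit_edge:
  assumes "v \<in> cycle_union_verts ms" and "d = 1 \<or> d = -1"
  shows "(v, cycle_shift ms v d) \<in> cycle_union_edges ms"
proof (cases v)
  case (Pair c i)
  define m where "m = ms ! c"
  define i' where "i' = nat ((int i + d) mod int m)"
  have c: "c < length ms" "i < m" using assms Pair by (auto simp: m_def mem_cycle_union_verts)
  have i': "int i' = (int i + d) mod int m" using c by (simp add: i'_def)
  have "i' < m" using c by (simp add: i'_def nat_less_iff)
  moreover from assms(2) have "i' = Suc i mod m \<or> i = Suc i' mod m"
  proof
    assume "d = 1"
    then have "int i' = int (Suc i mod m)" using i' by (simp add: of_nat_mod add.commute)
    then show ?thesis by simp
  next
    assume "d = -1"
    then have "(int i' + 1) mod int m = int i mod int m" using i' by (simp add: mod_add_left_eq)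
    then have "int (Suc i' mod m) = int i" using c by (simp add: of_nat_mod add.commute)
    then show ?thesis by simp
  qed
  ultimately show ?thesis using Pair c by (auto simp: cycle_union_edges_def cycle_shift_def i'_def m_def)
qed

section \<open>Homomorphisms from patterns into unions of long cycles\<close>

text \<open>A pattern is a graph on \<open>{..<j}\<close> given by an edge relation \<open>E\<close>, of which only the pairs
  in \<open>{..<j}\<close> matter; maps out of it are extensional functions on \<open>{..<j}\<close>.\<close>

definition homs :: "nat \<Rightarrow> (nat \<times> nat) set \<Rightarrow> 'a graph \<Rightarrow> (nat \<Rightarrow> 'a) set" where
  "homs j E X = {f \<in> {..<j} \<rightarrow>\<^sub>E fst X. \<forall>x<j. \<forall>y<j. (x, y) \<in> E \<longrightarrow> (f x, f y) \<in> snd X}"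

lemma homs_restrict: "homs j (E \<inter> {..<j} \<times> {..<j}) X = homs j E X"
  by (auto simp: homs_def)

lemma finite_homs: "finite (fst X) \<Longrightarrow> finite (homs j E X)"
  by (rule finite_subset[of _ "{..<j} \<rightarrow>\<^sub>E fst X"]) (auto simp: homs_def intro: finite_PiE)

definition embeddings :: "nat \<Rightarrow> (nat \<times> nat) set \<Rightarrow> 'a graph \<Rightarrow> (nat \<Rightarrow> 'a) set" where
  "embeddings j E X = {f \<in> {..<j} \<rightarrow>\<^sub>E fst X. inj_on f {..<j} \<and>
     (\<forall>x<j. \<forall>y<j. (x, y) \<in> E \<longleftrightarrow> (f x, f y) \<in> snd X)}"

lemma finite_embeddings: "finite (fst X) \<Longrightarrow> finite (embeddings j E X)"
  by (rule finite_subset[of _ "{..<j} \<rightarrow>\<^sub>E fst X"]) (auto simp: embeddings_def intro: finite_PiE)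

definition pattern_adj :: "nat \<Rightarrow> (nat \<times> nat) set \<Rightarrow> (nat \<times> nat) set" where
  "pattern_adj j E = {(x, y). x < j \<and> y < j \<and> ((x, y) \<in> E \<or> (y, x) \<in> E)}"

definition pattern_root :: "nat \<Rightarrow> (nat \<times> nat) set \<Rightarrow> nat \<Rightarrow> nat" where
  "pattern_root j E x = (LEAST r. (r, x) \<in> (pattern_adj j E)\<^sup>*)"

lemma pattern_root_rtrancl: "(pattern_root j E x, x) \<in> (pattern_adj j E)\<^sup>*"
  unfolding pattern_root_def by (rule LeastI[of _ x]) simp

lemma pattern_root_less: "x < j \<Longrightarrow> pattern_root j E x < j"
  unfolding pattern_root_def by (rule le_less_trans[OF Least_le]) simp_all

lemma pattern_root_eq:
  assumes "(x, y) \<in> (pattern_adj j E)\<^sup>*"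
  shows "pattern_root j E x = pattern_root j E y"
proof -
  have "sym ((pattern_adj j E)\<^sup>*)"
    by (rule sym_rtrancl) (auto simp: sym_def pattern_adj_def)
  then have "(r, x) \<in> (pattern_adj j E)\<^sup>* \<longleftrightarrow> (r, y) \<in> (pattern_adj j E)\<^sup>*" for r
    using assms by (meson rtrancl_trans symD)
  then show ?thesis unfolding pattern_root_def by simp
qed

lemma pattern_root_idem [simp]: "pattern_root j E (pattern_root j E x) = pattern_root j E x"
  using pattern_root_eq[OF pattern_root_rtrancl] by simp

lemma pattern_root_edge: "x < j \<Longrightarrow> y < j \<Longrightarrow> (x, y) \<in> E \<Longrightarrow> pattern_root j E x = pattern_root j E y"
  by (rule pattern_root_eq) (auto simp: pattern_adj_def)

lemma hom_cycle_union_in_verts: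
  "f \<in> homs j E (cycle_union ms) \<Longrightarrow> x < j \<Longrightarrow> f x \<in> cycle_union_verts ms"
  by (auto simp: homs_def cycle_union_def)

lemma hom_cycle_union_same_cycle:
  assumes f: "f \<in> homs j E (cycle_union ms)" and "(r, y) \<in> (pattern_adj j E)\<^sup>*"
  shows "fst (f y) = fst (f r)"
  using assms(2)
proof (induction rule: rtrancl_induct)
  case (step y z)
  then have "(f y, f z) \<in> cycle_union_edges ms \<or> (f z, f y) \<in> cycle_union_edges ms"
    using f by (auto simp: pattern_adj_def homs_def cycle_union_def)
  then show ?case using step.IH by (auto simp: cycle_union_edges_def)
qed simp

text \<open>A lift of a homomorphism into a union of cycles to the universal covers of the cycles:
  an integer position for each pattern vertex, zero at the roots of the components.\<close>

definition is_cycle_lift ::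
    "nat list \<Rightarrow> nat \<Rightarrow> (nat \<times> nat) set \<Rightarrow> (nat \<Rightarrow> nat \<times> nat) \<Rightarrow> (nat \<Rightarrow> int) \<Rightarrow> bool" where
  "is_cycle_lift ms j E f g \<longleftrightarrow>
     (\<forall>x<j. g (pattern_root j E x) = 0 \<and> f x = cycle_shift ms (f (pattern_root j E x)) (g x)) \<and>
     (\<forall>x<j. \<forall>y<j. (x, y) \<in> E \<longrightarrow> \<bar>g y - g x\<bar> = 1)"

lemma cycle_cut_exists:
  assumes long: "\<forall>c<length ms. j < ms ! c" and f: "f \<in> homs j E (cycle_union ms)" and r: "r < j"
  shows "\<exists>w < ms ! fst (f r). \<forall>y<j. pattern_root j E y = r \<longrightarrow> snd (f y) \<noteq> w"
proof (rule ccontr)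
  define K where "K = {y. y < j \<and> pattern_root j E y = r}"
  assume "\<not> ?thesis"
  then have sub: "{..<ms ! fst (f r)} \<subseteq> (snd \<circ> f) ` K" by (auto simp: K_def)
  have "finite K" by (simp add: K_def)
  then have "ms ! fst (f r) \<le> card K"
    using card_mono[OF finite_imageI sub] card_image_le[of K "snd \<circ> f"] by simp
  also have "card K \<le> j" using card_mono[of "{..<j}" K] by (auto simp: K_def)
  finally show False
    using long hom_cycle_union_in_verts[OF f r] by (cases "f r") (auto simp: mem_cycle_union_verts)
qed

text \<open>Cutting a cycle of length \<open>m\<close> at an unused position \<open>w\<close> turns it into a path, on which
  \<open>(a - w) mod m\<close> is a coordinate.\<close>

lemma cut_coordinate_pos:
  assumes "a < m" "w < m" "a \<noteq> w"
  shows "0 < (int a - int w) mod int m"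
proof -
  have "(int a - int w) mod int m \<noteq> 0"
  proof
    assume "(int a - int w) mod int m = 0"
    then have "int a mod int m = int w mod int m" by (simp add: mod_eq_dvd_iff mod_eq_0_iff_dvd)
    then show False using assms by simp
  qed
  then show ?thesis using assms by (simp add: order_less_le)
qed

lemma cut_coordinate_Suc:
  assumes "a < m" "b < m" "w < m" "a \<noteq> w" "b \<noteq> w" "b = Suc a mod m"
  shows "(int b - int w) mod int m = (int a - int w) mod int m + 1"
proof -
  define p where "p = (int a - int w) mod int m"
  have p: "0 < p" "p < int m" using cut_coordinate_pos[OF assms(1,3,4)] assms by (auto simp: p_def)
  have "(int b - int w) mod int m = (p + 1) mod int m"
    using assms(6) by (simp add: p_def of_nat_mod mod_simps algebra_simps)
  moreover have "0 < (int b - int w) mod int m" by (rule cut_coordinate_pos[OF assms(2,3,5)])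
  moreover have "p + 1 < int m \<or> p + 1 = int m" using p by auto
  ultimately show ?thesis using p unfolding p_def[symmetric] by auto
qed

lemma cut_coordinate_adjacent:
  assumes "a < m" "b < m" "w < m" "a \<noteq> w" "b \<noteq> w" "b = Suc a mod m \<or> a = Suc b mod m"
  shows "\<bar>(int b - int w) mod int m - (int a - int w) mod int m\<bar> = 1"
  using assms cut_coordinate_Suc[of a m b w] cut_coordinate_Suc[of b m a w] by auto

lemma mod_diff_shift: "((a::int) + ((b - w) mod m - (a - w) mod m)) mod m = b mod m"
proof -
  have "(a + ((b - w) mod m - (a - w) mod m)) mod m = (a + ((b - w) - (a - w))) mod m"
    by (metis mod_add_right_eq mod_diff_eq)
  then show ?thesis by simp
qed

lemma cycle_lift_exists:
  assumes long: "\<forall>c<length ms. j < ms ! c" and f: "f \<in> homs j E (cycle_union ms)"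
  shows "\<exists>g. is_cycle_lift ms j E f g"
proof -
  let ?r = "pattern_root j E"
  define m where "m x = ms ! fst (f x)" for x
  have "\<forall>r<j. \<exists>w<m r. \<forall>y<j. ?r y = r \<longrightarrow> snd (f y) \<noteq> w"
    using cycle_cut_exists[OF long f] by (simp add: m_def)
  then obtain cut where cut: "\<And>r. r < j \<Longrightarrow> cut r < m r \<and> (\<forall>y<j. ?r y = r \<longrightarrow> snd (f y) \<noteq> cut r)"
    by metis
  define pos where "pos y = (int (snd (f y)) - int (cut (?r y))) mod int (m (?r y))" for y
  define g where "g y = pos y - pos (?r y)" for y
  have same: "fst (f y) = fst (f (?r y))" for y
    by (rule hom_cycle_union_same_cycle[OF f pattern_root_rtrancl])
  have bounds: "snd (f y) < m (?r y)" "cut (?r y) < m (?r y)" "snd (f y) \<noteq> cut (?r y)" if "y < j" for y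
  proof -
    have "f y \<in> cycle_union_verts ms" by (rule hom_cycle_union_in_verts[OF f that])
    then show "snd (f y) < m (?r y)"
      using same[of y] by (cases "f y") (simp add: m_def mem_cycle_union_verts)
    show "cut (?r y) < m (?r y)" "snd (f y) \<noteq> cut (?r y)"
      using cut[OF pattern_root_less[OF that]] that by auto
  qed
  have "is_cycle_lift ms j E f g"
    unfolding is_cycle_lift_def
  proof (intro conjI allI impI)
    fix x assume x: "x < j"
    show "g (?r x) = 0" by (simp add: g_def)
    have "(int (snd (f (?r x))) + (pos x - pos (?r x))) mod int (m (?r x)) = int (snd (f x))"
      using bounds[OF x] by (simp add: pos_def mod_diff_shift)
    then show "f x = cycle_shift ms (f (?r x)) (g x)"
      using same[of x] by (simp add: cycle_shift_def g_def m_def prod_eq_iff)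
  next
    fix x y assume x: "x < j" and y: "y < j" and xy: "(x, y) \<in> E"
    have r: "?r y = ?r x" using pattern_root_edge[OF x y xy] by simp
    have "(f x, f y) \<in> cycle_union_edges ms" using f x y xy by (auto simp: homs_def cycle_union_def)
    then have "snd (f y) = Suc (snd (f x)) mod m (?r x) \<or> snd (f x) = Suc (snd (f y)) mod m (?r x)"
      using same[of x] by (auto simp: cycle_union_edges_def m_def)
    then have "\<bar>pos y - pos x\<bar> = 1" unfolding pos_def r
      by (intro cut_coordinate_adjacent) (use bounds[OF x] bounds[OF y] r in auto)
    then show "\<bar>g y - g x\<bar> = 1" unfolding g_def r by simp
  qed
  then show ?thesis by blast
qed

lemma unit_steps_eq_if_cong:
  fixes d d' m :: int
  assumes "\<bar>d\<bar> = 1" "\<bar>d'\<bar> = 1" "d mod m = d' mod m" "2 < m"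
  shows "d = d'"
proof (rule ccontr)
  assume "d \<noteq> d'"
  then have "\<bar>d - d'\<bar> = 2" using assms(1,2) by auto
  moreover have "m dvd d - d'" using assms(3) by (simp add: mod_eq_dvd_iff)
  ultimately have "m dvd 2" by (metis dvd_abs_iff)
  then show False using assms(4) zdvd_imp_le by fastforce
qed

lemma cycle_lift_unique:
  assumes long: "\<forall>c<length ms. 2 < ms ! c" and f: "f \<in> homs j E (cycle_union ms)"
    and g: "is_cycle_lift ms j E f g" and g': "is_cycle_lift ms j E f g'" and x: "x < j"
  shows "g x = g' x"
proof -
  let ?r = "pattern_root j E x"
  have r: "?r < j" using pattern_root_less[OF x] .
  have fr: "f ?r \<in> cycle_union_verts ms" by (rule hom_cycle_union_in_verts[OF f r])
  have "(?r, x) \<in> (pattern_adj j E)\<^sup>*" by (rule pattern_root_rtrancl)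
  then show ?thesis
  proof (induction rule: rtrancl_induct)
    case base
    then show ?case using g g' r unfolding is_cycle_lift_def by (metis pattern_root_idem)
  next
    case (step y z)
    have yz: "y < j" "z < j" "(y, z) \<in> E \<or> (z, y) \<in> E" using step(2) by (auto simp: pattern_adj_def)
    have roots: "pattern_root j E y = ?r" "pattern_root j E z = ?r"
      using pattern_root_eq[OF step(1)] pattern_root_eq[OF rtrancl_into_rtrancl[OF step(1,2)]] by simp_all
    have fy: "f y \<in> cycle_union_verts ms" by (rule hom_cycle_union_in_verts[OF f yz(1)])
    have "f z = cycle_shift ms (f y) (h z - h y)" if "is_cycle_lift ms j E f h" for h
    proof -
      have "f y = cycle_shift ms (f ?r) (h y)" "f z = cycle_shift ms (f ?r) (h z)"
        using that yz roots by (auto simp: is_cycle_lift_def)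
      then show ?thesis by (simp add: cycle_shift_add[OF fr])
    qed
    then have "(g z - g y) mod int (ms ! fst (f y)) = (g' z - g' y) mod int (ms ! fst (f y))"
      using g g' cycle_shift_eq_iff[OF fy] by metis
    moreover have "\<bar>g z - g y\<bar> = 1" "\<bar>g' z - g' y\<bar> = 1"
      using g g' yz by (auto simp: is_cycle_lift_def abs_minus_commute)
    moreover have "2 < ms ! fst (f y)" using long fy by (cases "f y") (auto simp: mem_cycle_union_verts)
    ultimately have "g z - g y = g' z - g' y" using unit_steps_eq_if_cong by fastforce
    then show ?case using step.IH by simp
  qed
qed

definition cycle_lift :: "nat list \<Rightarrow> nat \<Rightarrow> (nat \<times> nat) set \<Rightarrow> (nat \<Rightarrow> nat \<times> nat) \<Rightarrow> nat \<Rightarrow> int" where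
  "cycle_lift ms j E f = (SOME g. is_cycle_lift ms j E f g)"

lemma is_cycle_lift_cycle_lift:
  assumes "\<forall>c<length ms. j < ms ! c" and "f \<in> homs j E (cycle_union ms)"
  shows "is_cycle_lift ms j E f (cycle_lift ms j E f)"
  unfolding cycle_lift_def by (rule someI_ex[OF cycle_lift_exists[OF assms]])

text \<open>As lifts are
  unique, transferring back along the inverse of \<open>\<beta>\<close> recovers \<open>f\<close>.\<close>

definition transfer_hom :: "nat list \<Rightarrow> nat list \<Rightarrow> (nat \<times> nat \<Rightarrow> nat \<times> nat) \<Rightarrow> nat \<Rightarrow> (nat \<times> nat) set
    \<Rightarrow> (nat \<Rightarrow> nat \<times> nat) \<Rightarrow> nat \<Rightarrow> nat \<times> nat" where
  "transfer_hom ms ms' \<beta> j E f =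
     (\<lambda>x\<in>{..<j}. cycle_shift ms' (\<beta> (f (pattern_root j E x))) (cycle_lift ms j E f x))"

lemma transfer_hom_root:
  assumes "long_cycles j ms" "f \<in> homs j E (cycle_union ms)" "x < j"
    and "\<beta> (f (pattern_root j E x)) \<in> cycle_union_verts ms'"
  shows "transfer_hom ms ms' \<beta> j E f (pattern_root j E x) = \<beta> (f (pattern_root j E x))"
proof -
  have "cycle_lift ms j E f (pattern_root j E x) = 0"
    using is_cycle_lift_cycle_lift[OF long_cycles_lengths(1)[OF assms(1)] assms(2)] assms(3)
    by (simp add: is_cycle_lift_def)
  then show ?thesis using assms(3,4) pattern_root_less[OF assms(3)] by (simp add: transfer_hom_def cycle_shift_0)
qed

lemma transfer_hom_homs:
  assumes long: "long_cycles j ms" "long_cycles j ms'"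
    and \<beta>: "\<beta> ` cycle_union_verts ms \<subseteq> cycle_union_verts ms'" and f: "f \<in> homs j E (cycle_union ms)"
  shows "transfer_hom ms ms' \<beta> j E f \<in> homs j E (cycle_union ms')"
    and "is_cycle_lift ms' j E (transfer_hom ms ms' \<beta> j E f) (cycle_lift ms j E f)"
proof -
  let ?g = "cycle_lift ms j E f"
  let ?h = "transfer_hom ms ms' \<beta> j E f"
  have g: "is_cycle_lift ms j E f ?g"
    by (rule is_cycle_lift_cycle_lift[OF long_cycles_lengths(1)[OF long(1)] f])
  have root: "\<beta> (f (pattern_root j E x)) \<in> cycle_union_verts ms'" if "x < j" for x
    using \<beta> hom_cycle_union_in_verts[OF f pattern_root_less[OF that]] by blast
  have h: "?h x = cycle_shift ms' (\<beta> (f (pattern_root j E x))) (?g x)" if "x < j" for x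
    using that by (simp add: transfer_hom_def)
  have h_verts: "?h x \<in> cycle_union_verts ms'" if "x < j" for x
    using h[OF that] cycle_shift_in_verts[OF root[OF that]] by simp
  have edge: "(?h x, ?h y) \<in> cycle_union_edges ms'" if "x < j" "y < j" "(x, y) \<in> E" for x y
  proof -
    have "pattern_root j E y = pattern_root j E x" using pattern_root_edge[OF that] by simp
    then have "?h y = cycle_shift ms' (?h x) (?g y - ?g x)"
      using h[OF that(1)] h[OF that(2)] cycle_shift_add[OF root[OF that(1)]] by simp
    moreover have "\<bar>?g y - ?g x\<bar> = 1" using g that by (auto simp: is_cycle_lift_def)
    then have "?g y - ?g x = 1 \<or> ?g y - ?g x = -1" by arith
    ultimately show ?thesis using cycle_shift_unit_edge[OF h_verts[OF that(1)]] by metis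
  qed
  show hom: "?h \<in> homs j E (cycle_union ms')"
    using h_verts edge by (auto simp: homs_def cycle_union_def transfer_hom_def)
  show "is_cycle_lift ms' j E ?h ?g"
    using g h transfer_hom_root[OF long(1) f, of _ \<beta> ms'] root by (auto simp: is_cycle_lift_def)
qed

lemma transfer_hom_inverse:
  assumes long: "long_cycles j ms" "long_cycles j ms'"
    and \<beta>: "bij_betw \<beta> (cycle_union_verts ms) (cycle_union_verts ms')" and f: "f \<in> homs j E (cycle_union ms)"
  shows "transfer_hom ms' ms (inv_into (cycle_union_verts ms) \<beta>) j E (transfer_hom ms ms' \<beta> j E f) = f"
proof
  fix x
  let ?g = "cycle_lift ms j E f"
  let ?h = "transfer_hom ms ms' \<beta> j E f"
  have \<beta>_sub: "\<beta> ` cycle_union_verts ms \<subseteq> cycle_union_verts ms'" using \<beta> by (auto simp: bij_betw_def)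
  show "transfer_hom ms' ms (inv_into (cycle_union_verts ms) \<beta>) j E ?h x = f x"
  proof (cases "x < j")
    case True
    have root: "f (pattern_root j E x) \<in> cycle_union_verts ms"
      by (rule hom_cycle_union_in_verts[OF f pattern_root_less[OF True]])
    note h = transfer_hom_homs[OF long \<beta>_sub f]
    have lift_h: "cycle_lift ms' j E ?h x = ?g x"
      using cycle_lift_unique[OF long_cycles_lengths(2)[OF long(2)] h(1)
          is_cycle_lift_cycle_lift[OF long_cycles_lengths(1)[OF long(2)] h(1)] h(2) True] .
    have "transfer_hom ms' ms (inv_into (cycle_union_verts ms) \<beta>) j E ?h x
        = cycle_shift ms (inv_into (cycle_union_verts ms) \<beta> (?h (pattern_root j E x))) (?g x)"
      using True lift_h by (simp add: transfer_hom_def)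
    also have "\<dots> = cycle_shift ms (f (pattern_root j E x)) (?g x)"
      using transfer_hom_root[OF long(1) f True] root \<beta> by (simp add: bij_betw_def bij_betw_apply)
    also have "\<dots> = f x"
      using is_cycle_lift_cycle_lift[OF long_cycles_lengths(1)[OF long(1)] f] True
      by (simp add: is_cycle_lift_def)
    finally show ?thesis .
  qed (use f in \<open>auto simp: transfer_hom_def homs_def\<close>)
qed

lemma card_homs_cycle_union_le:
  assumes long: "long_cycles j ms" "long_cycles j ms'"
    and card: "card (cycle_union_verts ms) = card (cycle_union_verts ms')"
  shows "card (homs j E (cycle_union ms)) \<le> card (homs j E (cycle_union ms'))"
proof -
  obtain \<beta> where \<beta>: "bij_betw \<beta> (cycle_union_verts ms) (cycle_union_verts ms')"
    using finite_same_card_bij[OF finite_cycle_union_verts finite_cycle_union_verts card] by blast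
  have "inj_on (transfer_hom ms ms' \<beta> j E) (homs j E (cycle_union ms))"
    by (rule inj_on_inverseI[where g = "transfer_hom ms' ms (inv_into (cycle_union_verts ms) \<beta>) j E"])
      (rule transfer_hom_inverse[OF long \<beta>])
  moreover have "transfer_hom ms ms' \<beta> j E ` homs j E (cycle_union ms) \<subseteq> homs j E (cycle_union ms')"
    using transfer_hom_homs(1)[OF long] \<beta> by (auto simp: bij_betw_def)
  ultimately show ?thesis
    by (rule card_inj_on_le) (simp add: finite_homs cycle_union_def finite_cycle_union_verts)
qed

lemma card_homs_cycle_union:
  assumes "long_cycles j ms" "long_cycles j ms'"
    and "card (cycle_union_verts ms) = card (cycle_union_verts ms')"
  shows "card (homs j E (cycle_union ms)) = card (homs j E (cycle_union ms'))"
  using card_homs_cycle_union_le assms by (metis le_antisym)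

section \<open>Isomorphisms and the normal form\<close>

lemma graph_iso_refl: "graph_iso G G"
  unfolding graph_iso_def by (rule exI[of _ id]) simp

lemma graph_iso_sym:
  assumes "graph_iso G H"
  shows "graph_iso H G"
proof -
  obtain f where f: "bij_betw f (fst G) (fst H)"
    and e: "\<forall>x\<in>fst G. \<forall>y\<in>fst G. (x, y) \<in> snd G \<longleftrightarrow> (f x, f y) \<in> snd H"
    using assms by (auto simp: graph_iso_def)
  let ?g = "inv_into (fst G) f"
  have g: "bij_betw ?g (fst H) (fst G)" using f by (rule bij_betw_inv_into)
  have "(x, y) \<in> snd H \<longleftrightarrow> (?g x, ?g y) \<in> snd G" if "x \<in> fst H" "y \<in> fst H" for x y
  proof -
    have "?g x \<in> fst G" "?g y \<in> fst G" using bij_betw_apply[OF g] that by auto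
    moreover have "f (?g x) = x" "f (?g y) = y" using bij_betw_inv_into_right[OF f] that by auto
    ultimately show ?thesis using e by metis
  qed
  then show ?thesis using g by (auto simp: graph_iso_def)
qed

lemma graph_iso_trans:
  assumes "graph_iso G H" "graph_iso H K"
  shows "graph_iso G K"
proof -
  obtain f where f: "bij_betw f (fst G) (fst H)"
    and e: "\<forall>x\<in>fst G. \<forall>y\<in>fst G. (x, y) \<in> snd G \<longleftrightarrow> (f x, f y) \<in> snd H"
    using assms by (auto simp: graph_iso_def)
  obtain g where g: "bij_betw g (fst H) (fst K)"
    and e': "\<forall>x\<in>fst H. \<forall>y\<in>fst H. (x, y) \<in> snd H \<longleftrightarrow> (g x, g y) \<in> snd K"
    using assms by (auto simp: graph_iso_def)
  have "(x, y) \<in> snd G \<longleftrightarrow> ((g \<circ> f) x, (g \<circ> f) y) \<in> snd K" if "x \<in> fst G" "y \<in> fst G" for x y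
  proof -
    have "f x \<in> fst H" "f y \<in> fst H" using bij_betw_apply[OF f] that by auto
    then show ?thesis using e e' that by simp
  qed
  then show ?thesis using bij_betw_trans[OF f g] by (auto simp: graph_iso_def)
qed

lemma graph_iso_card: "graph_iso G H \<Longrightarrow> card (fst G) = card (fst H)"
  by (auto simp: graph_iso_def bij_betw_same_card)

definition postcompose :: "nat \<Rightarrow> ('a \<Rightarrow> 'b) \<Rightarrow> (nat \<Rightarrow> 'a) \<Rightarrow> nat \<Rightarrow> 'b" where
  "postcompose j f h = (\<lambda>x\<in>{..<j}. f (h x))"

lemma postcompose_apply [simp]: "x < j \<Longrightarrow> postcompose j f h x = f (h x)"
  by (simp add: postcompose_def)

lemma iso_postcompose:
  assumes f: "bij_betw f (fst G) (fst H)"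
    and e: "\<forall>x\<in>fst G. \<forall>y\<in>fst G. (x, y) \<in> snd G \<longleftrightarrow> (f x, f y) \<in> snd H"
    and h: "h \<in> {..<j} \<rightarrow>\<^sub>E fst G"
  shows "postcompose j f h \<in> {..<j} \<rightarrow>\<^sub>E fst H"
    and "inj_on (postcompose j f h) {..<j} \<longleftrightarrow> inj_on h {..<j}"
    and "\<forall>x<j. \<forall>y<j. (postcompose j f h x, postcompose j f h y) \<in> snd H \<longleftrightarrow> (h x, h y) \<in> snd G"
proof -
  have hG: "h x \<in> fst G" if "x < j" for x using h that by auto
  show "\<forall>x<j. \<forall>y<j. (postcompose j f h x, postcompose j f h y) \<in> snd H \<longleftrightarrow> (h x, h y) \<in> snd G"
    using e hG by simp
  show "postcompose j f h \<in> {..<j} \<rightarrow>\<^sub>E fst H"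
    using hG bij_betw_apply[OF f] by (auto simp: postcompose_def)
  show "inj_on (postcompose j f h) {..<j} \<longleftrightarrow> inj_on h {..<j}"
    using hG f by (auto simp: inj_on_def bij_betw_def)
qed

lemma inj_on_postcompose:
  assumes "bij_betw f (fst G) (fst H)"
  shows "inj_on (postcompose j f) ({..<j} \<rightarrow>\<^sub>E fst G)"
proof (rule inj_onI)
  fix h1 h2 assume h: "h1 \<in> {..<j} \<rightarrow>\<^sub>E fst G" "h2 \<in> {..<j} \<rightarrow>\<^sub>E fst G"
    and eq: "postcompose j f h1 = postcompose j f h2"
  show "h1 = h2"
  proof (rule PiE_ext[OF h])
    fix x assume x: "x \<in> {..<j}"
    have "postcompose j f h1 x = postcompose j f h2 x" using eq by simp
    then have "f (h1 x) = f (h2 x)" using x by simp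
    then show "h1 x = h2 x"
      using inj_onD[OF bij_betw_imp_inj_on[OF assms]] PiE_mem[OF h(1) x] PiE_mem[OF h(2) x] by blast
  qed
qed

lemma card_homs_iso_le:
  assumes "graph_iso G H" "finite (fst H)"
  shows "card (homs j E G) \<le> card (homs j E H)"
proof -
  obtain f where f: "bij_betw f (fst G) (fst H)"
    and e: "\<forall>x\<in>fst G. \<forall>y\<in>fst G. (x, y) \<in> snd G \<longleftrightarrow> (f x, f y) \<in> snd H"
    using assms by (auto simp: graph_iso_def)
  have "postcompose j f h \<in> homs j E H" if "h \<in> homs j E G" for h
  proof -
    have h: "h \<in> {..<j} \<rightarrow>\<^sub>E fst G" using that by (simp add: homs_def)
    show ?thesis using that iso_postcompose[OF f e h] by (simp add: homs_def)
  qed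
  then have "postcompose j f ` homs j E G \<subseteq> homs j E H" by blast
  moreover have "inj_on (postcompose j f) (homs j E G)"
    using inj_on_postcompose[OF f] by (rule inj_on_subset) (auto simp: homs_def)
  ultimately show ?thesis using card_inj_on_le finite_homs[OF assms(2)] by blast
qed

lemma card_homs_iso:
  assumes "graph_iso G H" "finite (fst G)" "finite (fst H)"
  shows "card (homs j E G) = card (homs j E H)"
  using card_homs_iso_le[OF assms(1,3)] card_homs_iso_le[OF graph_iso_sym[OF assms(1)] assms(2)]
  by (rule antisym)

lemma card_embeddings_iso_le:
  assumes "graph_iso G H" "finite (fst H)"
  shows "card (embeddings j E G) \<le> card (embeddings j E H)"
proof -
  obtain f where f: "bij_betw f (fst G) (fst H)"
    and e: "\<forall>x\<in>fst G. \<forall>y\<in>fst G. (x, y) \<in> snd G \<longleftrightarrow> (f x, f y) \<in> snd H"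
    using assms by (auto simp: graph_iso_def)
  have "postcompose j f h \<in> embeddings j E H" if "h \<in> embeddings j E G" for h
  proof -
    have h: "h \<in> {..<j} \<rightarrow>\<^sub>E fst G" using that by (simp add: embeddings_def)
    show ?thesis using that iso_postcompose[OF f e h] by (simp add: embeddings_def)
  qed
  then have "postcompose j f ` embeddings j E G \<subseteq> embeddings j E H" by blast
  moreover have "inj_on (postcompose j f) (embeddings j E G)"
    using inj_on_postcompose[OF f] by (rule inj_on_subset) (auto simp: embeddings_def)
  ultimately show ?thesis using card_inj_on_le finite_embeddings[OF assms(2)] by blast
qed

lemma card_embeddings_iso:
  assumes "graph_iso G H" "finite (fst G)" "finite (fst H)"
  shows "card (embeddings j E G) = card (embeddings j E H)"
  using card_embeddings_iso_le[OF assms(1,3)] card_embeddings_iso_le[OF graph_iso_sym[OF assms(1)] assms(2)]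
  by (rule antisym)

definition component_of :: "'a graph \<Rightarrow> 'a \<Rightarrow> 'a set" where
  "component_of G v = {y \<in> fst G. (v, y) \<in> (snd G)\<^sup>*}"

lemma components_eq: "components G = component_of G ` fst G"
  by (simp add: components_def component_of_def)

lemma component_of_self: "v \<in> fst G \<Longrightarrow> v \<in> component_of G v"
  by (simp add: component_of_def)

lemma component_of_subset: "component_of G v \<subseteq> fst G"
  by (auto simp: component_of_def)

lemma component_of_eq:
  assumes "sym (snd G)" "u \<in> component_of G v"
  shows "component_of G u = component_of G v"
proof -
  have "(v, u) \<in> (snd G)\<^sup>*" "(u, v) \<in> (snd G)\<^sup>*"
    using assms sym_rtrancl[OF assms(1)] by (auto simp: component_of_def dest: symD)
  then show ?thesis unfolding component_of_def by (meson rtrancl_trans)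
qed

lemma component_of_edge:
  assumes "simple_graph G" "(u, w) \<in> snd G"
  shows "component_of G u = component_of G w"
proof -
  have "w \<in> component_of G u" using assms by (auto simp: simple_graph_def component_of_def)
  then show ?thesis using assms(1) by (simp add: simple_graph_def component_of_eq)
qed

definition component_index :: "'a graph \<Rightarrow> 'a set list \<Rightarrow> 'a \<Rightarrow> nat" where
  "component_index G cs v = (THE c. c < length cs \<and> cs ! c = component_of G v)"

context
  fixes G :: "'a graph" and cs :: "'a set list" and \<phi> :: "'a set \<Rightarrow> 'a \<Rightarrow> nat"
  assumes simple: "simple_graph G" and cs: "distinct cs" "set cs = components G"
    and \<phi>: "\<And>C. C \<in> components G \<Longrightarrow> bij_betw (\<phi> C) C {..<card C} \<and>
      (\<forall>x\<in>C. \<forall>y\<in>C. (x, y) \<in> snd G \<longleftrightarrow> (\<phi> C x, \<phi> C y) \<in> snd (cycle_graph (card C)))"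
begin

lemma component_index_nth:
  assumes "v \<in> fst G"
  shows "component_index G cs v < length cs \<and> cs ! component_index G cs v = component_of G v"
proof -
  have "component_of G v \<in> set cs" using cs(2) assms by (simp add: components_eq)
  then obtain c where c: "c < length cs" "cs ! c = component_of G v" by (auto simp: in_set_conv_nth)
  then have "\<exists>!c. c < length cs \<and> cs ! c = component_of G v"
    using cs(1) by (metis nth_eq_iff_index_eq)
  then show ?thesis unfolding component_index_def by (rule theI')
qed

lemma component_index_eq_iff:
  assumes "u \<in> fst G" "v \<in> fst G"
  shows "component_index G cs u = component_index G cs v \<longleftrightarrow> component_of G u = component_of G v"
  using component_index_nth[OF assms(1)] component_index_nth[OF assms(2)] cs(1)
  by (metis nth_eq_iff_index_eq)

definition component_coords :: "'a \<Rightarrow> nat \<times> nat" where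
  "component_coords v = (component_index G cs v, \<phi> (component_of G v) v)"

lemma component_coords_bij:
  "bij_betw component_coords (fst G) (cycle_union_verts (map card cs))"
proof (rule bij_betw_imageI)
  have comp: "component_of G v \<in> components G" if "v \<in> fst G" for v
    using that by (simp add: components_eq)
  show "inj_on component_coords (fst G)"
  proof (rule inj_onI)
    fix u v assume u: "u \<in> fst G" and v: "v \<in> fst G" and eq: "component_coords u = component_coords v"
    then have same: "component_of G u = component_of G v"
      using component_index_eq_iff by (simp add: component_coords_def)
    then have "\<phi> (component_of G u) u = \<phi> (component_of G u) v" using eq by (simp add: component_coords_def)
    moreover have "u \<in> component_of G u" "v \<in> component_of G u"
      using component_of_self[OF u] component_of_self[OF v] same by auto
    ultimately show "u = v" using \<phi>[OF comp[OF u]] by (auto simp: bij_betw_def inj_on_def)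
  qed
  show "component_coords ` fst G = cycle_union_verts (map card cs)"
  proof (intro equalityI subsetI)
    fix p assume "p \<in> component_coords ` fst G"
    then obtain v where v: "v \<in> fst G" and p: "p = component_coords v" by blast
    have "\<phi> (component_of G v) v < card (component_of G v)"
      using \<phi>[OF comp[OF v]] component_of_self[OF v] by (auto simp: bij_betw_def)
    then show "p \<in> cycle_union_verts (map card cs)"
      using component_index_nth[OF v] by (simp add: p component_coords_def mem_cycle_union_verts)
  next
    fix p assume "p \<in> cycle_union_verts (map card cs)"
    then obtain c i where p: "p = (c, i)" and c: "c < length cs" "i < card (cs ! c)"
      by (cases p) (auto simp: mem_cycle_union_verts)
    have C: "cs ! c \<in> components G" using cs(2) c(1) nth_mem by blast
    have "i \<in> \<phi> (cs ! c) ` (cs ! c)" using \<phi>[OF C] c(2) by (auto simp: bij_betw_def)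
    then obtain v where v: "v \<in> cs ! c" "\<phi> (cs ! c) v = i" by blast
    obtain v0 where v0: "v0 \<in> fst G" "cs ! c = component_of G v0" using C by (auto simp: components_eq)
    have vG: "v \<in> fst G" using v v0 component_of_subset[of G v0] by auto
    have "component_of G v = cs ! c"
      using v v0 simple component_of_eq[of G v v0] by (simp add: simple_graph_def)
    moreover have "component_index G cs v = c"
      using component_index_nth[OF vG] calculation cs(1) c(1) by (metis nth_eq_iff_index_eq)
    ultimately show "p \<in> component_coords ` fst G"
      using v vG p by (auto simp: component_coords_def intro!: image_eqI[of _ _ v])
  qed
qed

lemma component_coords_edge_iff:
  assumes u: "u \<in> fst G" and v: "v \<in> fst G"
  shows "(u, v) \<in> snd G \<longleftrightarrow> (component_coords u, component_coords v) \<in> cycle_union_edges (map card cs)"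
proof (cases "component_of G u = component_of G v")
  case True
  let ?C = "component_of G u"
  have "u \<in> ?C" "v \<in> ?C" using component_of_self[OF u] component_of_self[OF v] True by auto
  moreover have "?C \<in> components G" using u by (simp add: components_eq)
  ultimately have "(u, v) \<in> snd G \<longleftrightarrow> (\<phi> ?C u, \<phi> ?C v) \<in> snd (cycle_graph (card ?C))"
    using \<phi> by blast
  moreover have "component_index G cs v = component_index G cs u"
    using component_index_eq_iff[OF u v] True by simp
  ultimately show ?thesis
    using component_index_nth[OF u] True by (simp add: component_coords_def cycle_union_edges_iff)
next
  case False
  then have "(u, v) \<notin> snd G" using component_of_edge[OF simple] by blast
  moreover have "component_index G cs v \<noteq> component_index G cs u"
    using component_index_eq_iff[OF u v] False by simp
  ultimately show ?thesis by (simp add: component_coords_def cycle_union_edges_iff)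
qed

lemma graph_iso_cycle_union: "graph_iso G (cycle_union (map card cs))"
  unfolding graph_iso_def cycle_union_def fst_conv snd_conv
  using component_coords_bij component_coords_edge_iff by blast

end

lemma long_cycle_components_iso_cycle_union:
  assumes simple: "simple_graph G" and long: "all_components_long_cycles k G"
  obtains ms where "long_cycles k ms" "graph_iso G (cycle_union ms)"
proof -
  have "finite (components G)" using simple by (simp add: components_eq simple_graph_def)
  then obtain cs where cs: "distinct cs" "set cs = components G"
    using finite_distinct_list by blast
  have cycle: "3 \<le> card C \<and> k < card C \<and> graph_iso (induced G C) (cycle_graph (card C))"
    if "C \<in> components G" for C
    using long that by (auto simp: all_components_long_cycles_def is_cycle_def induced_def)
  have "\<forall>C\<in>components G. \<exists>\<psi>. bij_betw \<psi> C {..<card C} \<and>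
      (\<forall>x\<in>C. \<forall>y\<in>C. (x, y) \<in> snd G \<longleftrightarrow> (\<psi> x, \<psi> y) \<in> snd (cycle_graph (card C)))"
    using cycle by (auto simp: graph_iso_def induced_def cycle_graph_def atLeast0LessThan)
  then obtain \<phi> where "\<And>C. C \<in> components G \<Longrightarrow> bij_betw (\<phi> C) C {..<card C} \<and>
      (\<forall>x\<in>C. \<forall>y\<in>C. (x, y) \<in> snd G \<longleftrightarrow> (\<phi> C x, \<phi> C y) \<in> snd (cycle_graph (card C)))"
    by metis
  then have "graph_iso G (cycle_union (map card cs))" by (rule graph_iso_cycle_union[OF simple cs])
  moreover have "long_cycles k (map card cs)"
    unfolding long_cycles_def using cycle cs(2) nth_mem by auto
  ultimately show ?thesis by (rule that[rotated])
qed

lemma card_homs_long_cycle_components: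
  assumes simple: "simple_graph G" "simple_graph H" and size: "card (fst G) = card (fst H)"
    and long: "all_components_long_cycles k G" "all_components_long_cycles k H" and "j \<le> k"
  shows "card (homs j E G) = card (homs j E H)"
proof -
  obtain msG where longG: "long_cycles k msG" and isoG: "graph_iso G (cycle_union msG)"
    using long_cycle_components_iso_cycle_union[OF simple(1) long(1)] .
  obtain msH where longH: "long_cycles k msH" and isoH: "graph_iso H (cycle_union msH)"
    using long_cycle_components_iso_cycle_union[OF simple(2) long(2)] .
  have fin: "finite (fst G)" "finite (fst H)" "finite (fst (cycle_union ms))" for ms
    using simple by (simp_all add: simple_graph_def cycle_union_def finite_cycle_union_verts)
  have "card (homs j E G) = card (homs j E (cycle_union msG))"
    by (rule card_homs_iso[OF isoG fin(1,3)])
  also have "\<dots> = card (homs j E (cycle_union msH))"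
    using long_cycles_mono[OF longG \<open>j \<le> k\<close>] long_cycles_mono[OF longH \<open>j \<le> k\<close>]
      graph_iso_card[OF isoG] graph_iso_card[OF isoH] size
    by (intro card_homs_cycle_union) (simp_all add: cycle_union_def)
  also have "\<dots> = card (homs j E H)"
    by (rule card_homs_iso[OF isoH fin(2,3), symmetric])
  finally show ?thesis .
qed

section \<open>From homomorphisms to the deck\<close>

definition inj_homs :: "nat \<Rightarrow> (nat \<times> nat) set \<Rightarrow> 'a graph \<Rightarrow> (nat \<Rightarrow> 'a) set" where
  "inj_homs j E X = {f \<in> homs j E X. inj_on f {..<j}}"

lemma finite_inj_homs: "finite (fst X) \<Longrightarrow> finite (inj_homs j E X)"
  unfolding inj_homs_def by (simp add: finite_homs)

definition first_index :: "(nat \<Rightarrow> 'a) \<Rightarrow> nat \<Rightarrow> nat" where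
  "first_index f x = (LEAST y. f y = f x)"

definition first_rank :: "(nat \<Rightarrow> 'a) \<Rightarrow> nat \<Rightarrow> nat" where
  "first_rank f x = card (f ` {..<first_index f x})"

lemma first_index_le: "first_index f x \<le> x"
  unfolding first_index_def by (rule Least_le) simp

lemma apply_first_index: "f (first_index f x) = f x"
  unfolding first_index_def by (rule LeastI[of _ x]) simp

lemma first_index_not_earlier: "f x \<notin> f ` {..<first_index f x}"
  unfolding first_index_def using not_less_Least by fastforce

lemma first_rank_less:
  assumes "first_index f x < first_index f y"
  shows "first_rank f x < first_rank f y"
proof -
  have "f x \<in> f ` {..<first_index f y}"
    using assms apply_first_index[of f x] by (metis imageI lessThan_iff)
  then have "f ` {..<first_index f x} \<subset> f ` {..<first_index f y}"
    using assms first_index_not_earlier[of f x] by (auto intro: image_mono)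
  then show ?thesis unfolding first_rank_def by (simp add: psubset_card_mono)
qed

lemma first_rank_eq_iff: "first_rank f x = first_rank f y \<longleftrightarrow> f x = f y"
proof
  assume "first_rank f x = first_rank f y"
  then have "first_index f x = first_index f y"
    using first_rank_less[of f x y] first_rank_less[of f y x] by (metis less_irrefl linorder_neqE_nat)
  then show "f x = f y" by (metis apply_first_index)
qed (simp add: first_rank_def first_index_def)

lemma card_image_eq_if_same_kernel:
  assumes "\<forall>a\<in>A. \<forall>b\<in>A. f a = f b \<longleftrightarrow> g a = g b"
  shows "card (f ` A) = card (g ` A)"
proof -
  have "bij_betw (\<lambda>u. g (inv_into A f u)) (f ` A) (g ` A)"
  proof (rule bij_betw_imageI)
    have *: "g (inv_into A f (f a)) = g a" if "a \<in> A" for a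
      using assms that inv_into_into[of "f a" f A] f_inv_into_f[of "f a" f A] by auto
    show "inj_on (\<lambda>u. g (inv_into A f u)) (f ` A)"
      using * assms by (auto simp: inj_on_def)
    show "(\<lambda>u. g (inv_into A f u)) ` f ` A = g ` A"
      using * by (auto simp: image_iff)
  qed
  then show ?thesis by (rule bij_betw_same_card)
qed

lemma first_index_mono_kernel:
  assumes "\<forall>y<j. f y = f x \<longrightarrow> g y = g x" "x < j"
  shows "first_index g x \<le> first_index f x"
proof -
  have "first_index f x < j" using first_index_le[of f x] assms(2) by simp
  then have "g (first_index f x) = g x" using assms(1) apply_first_index[of f x] by blast
  then show ?thesis unfolding first_index_def[of g] by (rule Least_le)
qed

lemma first_rank_same_kernel:
  assumes kernel: "\<forall>x<j. \<forall>y<j. f x = f y \<longleftrightarrow> g x = g y" and x: "x < j"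
  shows "first_rank f x = first_rank g x"
proof -
  have "first_index f x = first_index g x"
    using first_index_mono_kernel[of j f x g] first_index_mono_kernel[of j g x f] kernel x
    by (simp add: le_antisym)
  moreover have "card (f ` {..<first_index f x}) = card (g ` {..<first_index f x})"
    by (rule card_image_eq_if_same_kernel) (use kernel x first_index_le[of f x] in auto)
  ultimately show ?thesis unfolding first_rank_def by simp
qed

lemma first_rank_less_card: "x < j \<Longrightarrow> first_rank f x < card (f ` {..<j})"
  unfolding first_rank_def
  by (rule psubset_card_mono) (use first_index_le[of f x] first_index_not_earlier[of f x] in auto)

lemma first_rank_image: "first_rank f ` {..<j} = {..<card (f ` {..<j})}"
proof (rule card_subset_eq)
  show "first_rank f ` {..<j} \<subseteq> {..<card (f ` {..<j})}" using first_rank_less_card by auto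
  show "card (first_rank f ` {..<j}) = card {..<card (f ` {..<j})}"
    using card_image_eq_if_same_kernel[of "{..<j}" "first_rank f" f] first_rank_eq_iff by auto
qed simp

text \<open>Restricted growth functions: canonical representatives of the partitions of \<open>{..<j}\<close>.\<close>

definition restricted_growth :: "nat \<Rightarrow> (nat \<Rightarrow> nat) set" where
  "restricted_growth j = {q \<in> {..<j} \<rightarrow>\<^sub>E UNIV. \<forall>x<j. first_rank q x = q x}"

definition num_blocks :: "nat \<Rightarrow> (nat \<Rightarrow> nat) \<Rightarrow> nat" where
  "num_blocks j q = card (q ` {..<j})"

definition quotient_edges :: "nat \<Rightarrow> (nat \<Rightarrow> nat) \<Rightarrow> (nat \<times> nat) set \<Rightarrow> (nat \<times> nat) set" where
  "quotient_edges j q E = {(q x, q y) | x y. x < j \<and> y < j \<and> (x, y) \<in> E}"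

definition compose_quotient :: "nat \<Rightarrow> (nat \<Rightarrow> nat) \<Rightarrow> (nat \<Rightarrow> 'a) \<Rightarrow> nat \<Rightarrow> 'a" where
  "compose_quotient j q f = (\<lambda>x\<in>{..<j}. f (q x))"

lemma restricted_growth_image:
  assumes "q \<in> restricted_growth j"
  shows "q ` {..<j} = {..<num_blocks j q}"
proof -
  have "q ` {..<j} = first_rank q ` {..<j}" using assms by (auto simp: restricted_growth_def image_def)
  then show ?thesis by (simp add: first_rank_image num_blocks_def)
qed

lemma finite_restricted_growth: "finite (restricted_growth j)"
proof (rule finite_subset)
  show "restricted_growth j \<subseteq> {..<j} \<rightarrow>\<^sub>E {..<j}"
  proof
    fix q assume q: "q \<in> restricted_growth j"
    have "q x < j" if "x < j" for x
      using q that first_rank_less_card[OF that, of q] card_image_le[of "{..<j}" q]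
      by (auto simp: restricted_growth_def)
    then show "q \<in> {..<j} \<rightarrow>\<^sub>E {..<j}" using q by (auto simp: restricted_growth_def)
  qed
qed (simp add: finite_PiE)

lemma restrict_id_restricted_growth: "restrict id {..<j} \<in> restricted_growth j"
proof -
  have "first_index (restrict id {..<j}) x = x" if "x < j" for x
    unfolding first_index_def by (rule Least_equality) (use that in \<open>auto split: if_splits\<close>)
  then have "first_rank (restrict id {..<j}) x = x" if "x < j" for x
    using that by (simp add: first_rank_def)
  then show ?thesis by (simp add: restricted_growth_def)
qed

lemma num_blocks_restrict_id: "num_blocks j (restrict id {..<j}) = j"
  by (simp add: num_blocks_def)

lemma quotient_edges_restrict_id: "quotient_edges j (restrict id {..<j}) E = E \<inter> {..<j} \<times> {..<j}"
  by (auto simp: quotient_edges_def)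

lemma num_blocks_less:
  assumes q: "q \<in> restricted_growth j" and ne: "q \<noteq> restrict id {..<j}"
  shows "num_blocks j q < j"
proof -
  have "num_blocks j q \<le> j" using card_image_le[of "{..<j}" q] by (simp add: num_blocks_def)
  moreover have "num_blocks j q \<noteq> j"
  proof
    assume "num_blocks j q = j"
    then have "inj_on q {..<j}" by (intro eq_card_imp_inj_on) (auto simp: num_blocks_def)
    then have "first_rank q x = first_rank (restrict id {..<j}) x" if "x < j" for x
      using that by (intro first_rank_same_kernel) (auto simp: inj_on_def)
    then have "q x = x" if "x < j" for x
      using q restrict_id_restricted_growth that by (auto simp: restricted_growth_def)
    then have "q = restrict id {..<j}" using q by (auto simp: restricted_growth_def PiE_def extensional_def)
    then show False using ne by simp
  qed
  ultimately show ?thesis by simp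
qed

lemma first_rank_compose_quotient:
  assumes q: "q \<in> restricted_growth j" and f: "f \<in> inj_homs (num_blocks j q) (quotient_edges j q E) X"
    and x: "x < j"
  shows "first_rank (compose_quotient j q f) x = q x"
proof -
  have "q y < num_blocks j q" if "y < j" for y using restricted_growth_image[OF q] that by auto
  moreover have "inj_on f {..<num_blocks j q}" using f by (simp add: inj_homs_def)
  ultimately have "\<forall>y<j. \<forall>z<j. compose_quotient j q f y = compose_quotient j q f z \<longleftrightarrow> q y = q z"
    by (auto simp: compose_quotient_def inj_on_def)
  then have "first_rank (compose_quotient j q f) x = first_rank q x" using first_rank_same_kernel x by blast
  then show ?thesis using q x by (simp add: restricted_growth_def)
qed

lemma compose_quotient_homs:
  assumes q: "q \<in> restricted_growth j" and f: "f \<in> inj_homs (num_blocks j q) (quotient_edges j q E) X"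
  shows "compose_quotient j q f \<in> homs j E X"
proof -
  have blocks: "q x < num_blocks j q" if "x < j" for x using restricted_growth_image[OF q] that by auto
  have "(q x, q y) \<in> quotient_edges j q E" if "x < j" "y < j" "(x, y) \<in> E" for x y
    using that by (auto simp: quotient_edges_def)
  then show ?thesis
    using f blocks unfolding homs_def inj_homs_def compose_quotient_def by auto
qed

lemma first_rank_restricted_growth: "restrict (first_rank f) {..<j} \<in> restricted_growth j"
proof -
  have "\<forall>x<j. \<forall>y<j. restrict (first_rank f) {..<j} x = restrict (first_rank f) {..<j} y \<longleftrightarrow> f x = f y"
    by (simp add: first_rank_eq_iff)
  then have "first_rank (restrict (first_rank f) {..<j}) x = first_rank f x" if "x < j" for x
    using first_rank_same_kernel that by blast
  then show ?thesis by (simp add: restricted_growth_def)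
qed

lemma hom_factors_through_quotient:
  assumes f: "f \<in> homs j E X"
  shows "\<exists>q\<in>restricted_growth j. \<exists>f'\<in>inj_homs (num_blocks j q) (quotient_edges j q E) X.
    compose_quotient j q f' = f"
proof -
  define q where "q = restrict (first_rank f) {..<j}"
  define c where "c = card (f ` {..<j})"
  define f' where "f' = (\<lambda>i\<in>{..<c}. f (SOME x. x < j \<and> first_rank f x = i))"
  have kernel: "\<forall>x<j. \<forall>y<j. q x = q y \<longleftrightarrow> f x = f y" by (simp add: q_def first_rank_eq_iff)
  have q: "q \<in> restricted_growth j" unfolding q_def by (rule first_rank_restricted_growth)
  have image: "q ` {..<j} = {..<c}" using first_rank_image[of f j] by (simp add: q_def c_def)
  then have blocks: "num_blocks j q = c" by (simp add: num_blocks_def)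
  have f'q: "f' (q x) = f x" if "x < j" for x
  proof -
    let ?y = "SOME y. y < j \<and> first_rank f y = first_rank f x"
    have "?y < j \<and> first_rank f ?y = first_rank f x" by (rule someI_ex) (use that in blast)
    then have "f ?y = f x" by (simp add: first_rank_eq_iff)
    then show ?thesis using image that by (auto simp: f'_def q_def)
  qed
  have block_rep: "\<exists>x<j. i = q x" if "i < c" for i using image that by (metis imageE lessThan_iff)
  have "f' \<in> inj_homs c (quotient_edges j q E) X"
    unfolding inj_homs_def homs_def
  proof (intro CollectI conjI allI impI)
    show "f' \<in> {..<c} \<rightarrow>\<^sub>E fst X"
    proof (rule PiE_I)
      fix i assume "i \<in> {..<c}"
      then obtain x where "x < j" "i = q x" using block_rep by auto
      then show "f' i \<in> fst X" using f'q f by (auto simp: homs_def)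
    qed (simp add: f'_def)
  next
    fix a b assume "a < c" "b < c" "(a, b) \<in> quotient_edges j q E"
    then obtain x y where "x < j" "y < j" "(x, y) \<in> E" "a = q x" "b = q y"
      by (auto simp: quotient_edges_def)
    then show "(f' a, f' b) \<in> snd X" using f'q f by (auto simp: homs_def)
  next
    show "inj_on f' {..<c}"
    proof (rule inj_onI)
      fix a b assume "a \<in> {..<c}" "b \<in> {..<c}" and eq: "f' a = f' b"
      then obtain x y where "x < j" "y < j" "a = q x" "b = q y" using block_rep by (metis lessThan_iff)
      then show "a = b" using f'q kernel eq by auto
    qed
  qed
  moreover have "compose_quotient j q f' = f"
    using f'q f by (auto simp: compose_quotient_def homs_def PiE_def extensional_def)
  ultimately show ?thesis using q blocks by blast
qed

lemma homs_eq_Union_quotients: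
  "homs j E X = (\<Union>q\<in>restricted_growth j. compose_quotient j q ` inj_homs (num_blocks j q) (quotient_edges j q E) X)"
proof (intro equalityI subsetI)
  fix f assume "f \<in> homs j E X"
  then obtain q f' where q: "q \<in> restricted_growth j"
    and f': "f' \<in> inj_homs (num_blocks j q) (quotient_edges j q E) X" and "compose_quotient j q f' = f"
    using hom_factors_through_quotient by blast
  then show "f \<in> (\<Union>q\<in>restricted_growth j. compose_quotient j q ` inj_homs (num_blocks j q) (quotient_edges j q E) X)"
    by (intro UN_I[OF q] rev_image_eqI[OF f']) simp
next
  fix f assume "f \<in> (\<Union>q\<in>restricted_growth j. compose_quotient j q ` inj_homs (num_blocks j q) (quotient_edges j q E) X)"
  then show "f \<in> homs j E X" by (auto intro: compose_quotient_homs)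
qed

lemma inj_on_compose_quotient:
  assumes q: "q \<in> restricted_growth j"
  shows "inj_on (compose_quotient j q) (inj_homs (num_blocks j q) E X)"
proof (rule inj_onI)
  fix f1 f2 assume f: "f1 \<in> inj_homs (num_blocks j q) E X" "f2 \<in> inj_homs (num_blocks j q) E X"
    and eq: "compose_quotient j q f1 = compose_quotient j q f2"
  show "f1 = f2"
  proof
    fix i
    show "f1 i = f2 i"
    proof (cases "i < num_blocks j q")
      case True
      then obtain x where "x < j" "i = q x" using restricted_growth_image[OF q] by (metis imageE lessThan_iff)
      then show ?thesis using eq by (metis compose_quotient_def lessThan_iff restrict_apply')
    qed (use f in \<open>auto simp: inj_homs_def homs_def PiE_def extensional_def\<close>)
  qed
qed

lemma card_homs_sum_quotients:
  assumes "finite (fst X)"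
  shows "card (homs j E X) = (\<Sum>q\<in>restricted_growth j. card (inj_homs (num_blocks j q) (quotient_edges j q E) X))"
proof -
  have disjoint: "compose_quotient j q1 ` inj_homs (num_blocks j q1) (quotient_edges j q1 E) X \<inter>
      compose_quotient j q2 ` inj_homs (num_blocks j q2) (quotient_edges j q2 E) X = {}"
    if "q1 \<in> restricted_growth j" "q2 \<in> restricted_growth j" "q1 \<noteq> q2" for q1 q2
  proof -
    have "q1 = q2" if "f1 \<in> inj_homs (num_blocks j q1) (quotient_edges j q1 E) X"
      "f2 \<in> inj_homs (num_blocks j q2) (quotient_edges j q2 E) X"
      "compose_quotient j q1 f1 = compose_quotient j q2 f2" for f1 f2
    proof
      fix x
      show "q1 x = q2 x"
      proof (cases "x < j")
        case True
        have "q1 x = first_rank (compose_quotient j q1 f1) x"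
          by (rule first_rank_compose_quotient[OF \<open>q1 \<in> _\<close> that(1) True, symmetric])
        also have "\<dots> = q2 x"
          unfolding that(3) by (rule first_rank_compose_quotient[OF \<open>q2 \<in> _\<close> that(2) True])
        finally show ?thesis .
      qed (use \<open>q1 \<in> _\<close> \<open>q2 \<in> _\<close> in \<open>auto simp: restricted_growth_def PiE_def extensional_def\<close>)
    qed
    then show ?thesis using that(3) by blast
  qed
  have "card (homs j E X) = (\<Sum>q\<in>restricted_growth j.
      card (compose_quotient j q ` inj_homs (num_blocks j q) (quotient_edges j q E) X))"
    unfolding homs_eq_Union_quotients
    by (rule card_UN_disjoint) (use finite_restricted_growth finite_inj_homs[OF assms] disjoint in auto)
  also have "\<dots> = (\<Sum>q\<in>restricted_growth j. card (inj_homs (num_blocks j q) (quotient_edges j q E) X))"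
    by (rule sum.cong) (auto intro: card_image inj_on_compose_quotient)
  finally show ?thesis .
qed

lemma card_homs_split:
  assumes "finite (fst X)"
  shows "card (homs j E X) = card (inj_homs j E X) +
    (\<Sum>q\<in>restricted_growth j - {restrict id {..<j}}. card (inj_homs (num_blocks j q) (quotient_edges j q E) X))"
proof -
  have "card (homs j E X) = (\<Sum>q\<in>restricted_growth j. card (inj_homs (num_blocks j q) (quotient_edges j q E) X))"
    by (rule card_homs_sum_quotients[OF assms])
  also have "\<dots> = card (inj_homs j (E \<inter> {..<j} \<times> {..<j}) X) +
      (\<Sum>q\<in>restricted_growth j - {restrict id {..<j}}. card (inj_homs (num_blocks j q) (quotient_edges j q E) X))"
    by (subst sum.remove[OF finite_restricted_growth restrict_id_restricted_growth])
      (simp add: num_blocks_restrict_id quotient_edges_restrict_id)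
  finally show ?thesis by (simp add: inj_homs_def homs_restrict)
qed

text \<open>Moebius inversion over the partition lattice, in the form of a strong induction on \<open>j\<close>.\<close>

lemma card_inj_homs_eq:
  assumes finG: "finite (fst G)" and finH: "finite (fst H)"
    and homs: "\<And>j E. j \<le> k \<Longrightarrow> card (homs j E G) = card (homs j E H)"
  shows "j \<le> k \<Longrightarrow> card (inj_homs j E G) = card (inj_homs j E H)"
proof (induction j arbitrary: E rule: less_induct)
  case (less j)
  have "(\<Sum>q\<in>restricted_growth j - {restrict id {..<j}}. card (inj_homs (num_blocks j q) (quotient_edges j q E) G))
      = (\<Sum>q\<in>restricted_growth j - {restrict id {..<j}}. card (inj_homs (num_blocks j q) (quotient_edges j q E) H))"
    using num_blocks_less less by (intro sum.cong) auto
  then show ?case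
    using card_homs_split[OF finG, of j E] card_homs_split[OF finH, of j E] homs[OF less.prems] by simp
qed

lemma embeddings_restrict: "embeddings j (E \<inter> {..<j} \<times> {..<j}) X = embeddings j E X"
  by (auto simp: embeddings_def)

definition edge_supersets :: "nat \<Rightarrow> (nat \<times> nat) set \<Rightarrow> (nat \<times> nat) set set" where
  "edge_supersets j E = {E'. E \<subseteq> E' \<and> E' \<subseteq> {..<j} \<times> {..<j}}"

lemma finite_edge_supersets: "finite (edge_supersets j E)"
  by (rule finite_subset[of _ "Pow ({..<j} \<times> {..<j})"]) (auto simp: edge_supersets_def)

lemma inj_homs_eq_Union_embeddings:
  assumes "E \<subseteq> {..<j} \<times> {..<j}"
  shows "inj_homs j E X = (\<Union>E'\<in>edge_supersets j E. embeddings j E' X)"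
proof (intro equalityI subsetI)
  fix f assume f: "f \<in> inj_homs j E X"
  define E' where "E' = {(x, y). x < j \<and> y < j \<and> (f x, f y) \<in> snd X}"
  have "E' \<in> edge_supersets j E"
    using f assms by (auto simp: edge_supersets_def E'_def inj_homs_def homs_def)
  moreover have "f \<in> embeddings j E' X"
    using f by (auto simp: embeddings_def E'_def inj_homs_def homs_def)
  ultimately show "f \<in> (\<Union>E'\<in>edge_supersets j E. embeddings j E' X)" by blast
qed (auto simp: edge_supersets_def embeddings_def inj_homs_def homs_def)

lemma embeddings_disjoint:
  assumes "E1 \<subseteq> {..<j} \<times> {..<j}" "E2 \<subseteq> {..<j} \<times> {..<j}" "E1 \<noteq> E2"
  shows "embeddings j E1 X \<inter> embeddings j E2 X = {}"
  using assms by (auto simp: embeddings_def)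

lemma card_inj_homs_split:
  assumes fin: "finite (fst X)" and E: "E \<subseteq> {..<j} \<times> {..<j}"
  shows "card (inj_homs j E X) = card (embeddings j E X) +
    (\<Sum>E'\<in>edge_supersets j E - {E}. card (embeddings j E' X))"
proof -
  have "card (inj_homs j E X) = (\<Sum>E'\<in>edge_supersets j E. card (embeddings j E' X))"
    unfolding inj_homs_eq_Union_embeddings[OF E]
  proof (rule card_UN_disjoint)
    show "\<forall>E1\<in>edge_supersets j E. \<forall>E2\<in>edge_supersets j E. E1 \<noteq> E2 \<longrightarrow>
        embeddings j E1 X \<inter> embeddings j E2 X = {}"
    proof (intro ballI impI)
      fix E1 E2 assume "E1 \<in> edge_supersets j E" "E2 \<in> edge_supersets j E" "E1 \<noteq> E2"
      then show "embeddings j E1 X \<inter> embeddings j E2 X = {}"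
        by (intro embeddings_disjoint) (auto simp: edge_supersets_def)
    qed
  qed (simp_all add: finite_edge_supersets finite_embeddings[OF fin])
  also have "\<dots> = card (embeddings j E X) + (\<Sum>E'\<in>edge_supersets j E - {E}. card (embeddings j E' X))"
    by (rule sum.remove[OF finite_edge_supersets]) (use E in \<open>simp add: edge_supersets_def\<close>)
  finally show ?thesis .
qed

text \<open>Moebius inversion over the lattice of edge sets, as an induction on the number of
  non-edges.\<close>

lemma card_embeddings_eq:
  assumes finG: "finite (fst G)" and finH: "finite (fst H)"
    and inj_homs: "\<And>E. card (inj_homs k E G) = card (inj_homs k E H)"
  shows "E \<subseteq> {..<k} \<times> {..<k} \<Longrightarrow> card (embeddings k E G) = card (embeddings k E H)"
proof (induction "card ({..<k} \<times> {..<k} - E)" arbitrary: E rule: less_induct)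
  case less
  have "card (embeddings k E' G) = card (embeddings k E' H)" if "E' \<in> edge_supersets k E - {E}" for E'
  proof -
    have "E \<subset> E'" "E' \<subseteq> {..<k} \<times> {..<k}" using that by (auto simp: edge_supersets_def)
    moreover from this have "card ({..<k} \<times> {..<k} - E') < card ({..<k} \<times> {..<k} - E)"
      by (intro psubset_card_mono) auto
    ultimately show ?thesis using less by blast
  qed
  then have "(\<Sum>E'\<in>edge_supersets k E - {E}. card (embeddings k E' G))
      = (\<Sum>E'\<in>edge_supersets k E - {E}. card (embeddings k E' H))"
    by (rule sum.cong[OF refl])
  then show ?case
    using card_inj_homs_split[OF finG less.prems] card_inj_homs_split[OF finH less.prems] inj_homs
    by simp
qed

definition copies :: "nat \<Rightarrow> nat graph \<Rightarrow> 'a graph \<Rightarrow> 'a set set" where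
  "copies k F X = {S. S \<subseteq> fst X \<and> card S = k \<and> graph_iso F (induced X S)}"

lemma embeddings_onto_eq:
  assumes S: "finite S" "card S = k" "S \<subseteq> fst X"
  shows "{f \<in> embeddings k E X. f ` {..<k} = S} = embeddings k E (induced X S)"
proof (intro equalityI subsetI)
  fix f assume "f \<in> {f \<in> embeddings k E X. f ` {..<k} = S}"
  then show "f \<in> embeddings k E (induced X S)" by (auto simp: embeddings_def induced_def)
next
  fix f assume f: "f \<in> embeddings k E (induced X S)"
  then have "f ` {..<k} \<subseteq> S" "card (f ` {..<k}) = card S"
    using S by (auto simp: embeddings_def induced_def card_image)
  then have "f ` {..<k} = S" by (intro card_subset_eq[OF S(1)])
  moreover have "f \<in> {..<k} \<rightarrow>\<^sub>E S" using f by (simp add: embeddings_def induced_def)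
  then have "f \<in> {..<k} \<rightarrow>\<^sub>E fst X" using S(3) by (auto simp: PiE_iff)
  ultimately show "f \<in> {f \<in> embeddings k E X. f ` {..<k} = S}"
    using f by (auto simp: embeddings_def induced_def)
qed

lemma card_embeddings_eq_copies:
  assumes fin: "finite (fst X)"
  shows "card (embeddings k E X) = card (copies k ({..<k}, E) X) * card (embeddings k E ({..<k}, E))"
proof -
  let ?F = "({..<k}, E)"
  let ?onto = "\<lambda>S. {f \<in> embeddings k E X. f ` {..<k} = S}"
  have union: "embeddings k E X = (\<Union>S\<in>copies k ?F X. ?onto S)"
  proof (intro equalityI subsetI)
    fix f assume f: "f \<in> embeddings k E X"
    then have "bij_betw f {..<k} (f ` {..<k})" by (simp add: embeddings_def bij_betw_def)
    moreover have "\<forall>x\<in>{..<k}. \<forall>y\<in>{..<k}. (x, y) \<in> E \<longleftrightarrow> (f x, f y) \<in> snd X \<inter> f ` {..<k} \<times> f ` {..<k}"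
      using f by (auto simp: embeddings_def)
    ultimately have "graph_iso ?F (induced X (f ` {..<k}))"
      unfolding graph_iso_def induced_def fst_conv snd_conv by blast
    moreover have "f ` {..<k} \<subseteq> fst X" "card (f ` {..<k}) = k"
      using f by (auto simp: embeddings_def card_image)
    ultimately show "f \<in> (\<Union>S\<in>copies k ?F X. ?onto S)" using f by (auto simp: copies_def)
  qed blast
  have finite: "finite (copies k ?F X)"
    by (rule finite_subset[of _ "Pow (fst X)"]) (use fin in \<open>auto simp: copies_def\<close>)
  have onto: "card (?onto S) = card (embeddings k E ?F)" if "S \<in> copies k ?F X" for S
  proof -
    have S: "S \<subseteq> fst X" "card S = k" "graph_iso ?F (induced X S)" using that by (auto simp: copies_def)
    have "card (?onto S) = card (embeddings k E (induced X S))"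
      using S fin by (simp add: embeddings_onto_eq[OF finite_subset[OF S(1) fin] S(2,1)])
    also have "\<dots> = card (embeddings k E ?F)"
      by (rule card_embeddings_iso[OF graph_iso_sym[OF S(3)]])
        (use S fin in \<open>auto simp: induced_def intro: finite_subset\<close>)
    finally show ?thesis .
  qed
  have "card (embeddings k E X) = card (\<Union>S\<in>copies k ?F X. ?onto S)" by (rule arg_cong[OF union])
  also have "\<dots> = (\<Sum>S\<in>copies k ?F X. card (?onto S))"
    by (rule card_UN_disjoint) (use finite finite_embeddings[OF fin] in auto)
  also have "\<dots> = (\<Sum>S\<in>copies k ?F X. card (embeddings k E ?F))" by (rule sum.cong[OF refl onto])
  finally show ?thesis by simp
qed

lemma card_embeddings_self_pos: "0 < card (embeddings k E ({..<k}, E))"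
proof -
  have "restrict id {..<k} \<in> embeddings k E ({..<k}, E)" by (simp add: embeddings_def)
  then show ?thesis using finite_embeddings[of "({..<k}, E)"] by (auto simp: card_gt_0_iff)
qed

lemma card_copies_eq:
  assumes "finite (fst G)" "finite (fst H)"
    and "card (embeddings k E G) = card (embeddings k E H)"
  shows "card (copies k ({..<k}, E) G) = card (copies k ({..<k}, E) H)"
  using assms card_embeddings_eq_copies card_embeddings_self_pos[of k E] by (metis mult_right_cancel not_less0)

lemma iso_class_eq_iff:
  assumes "graph_iso (F :: nat graph) Y"
  shows "iso_class X = iso_class Y \<longleftrightarrow> graph_iso F X"
proof
  assume eq: "iso_class X = iso_class Y"
  have "F \<in> iso_class Y" using assms by (simp add: iso_class_def)
  then show "graph_iso F X" unfolding eq[symmetric] by (simp add: iso_class_def)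
next
  assume "graph_iso F X"
  then have "graph_iso N X \<longleftrightarrow> graph_iso N Y" for N :: "nat graph"
    using assms graph_iso_sym graph_iso_trans by metis
  then show "iso_class X = iso_class Y" by (simp add: iso_class_def)
qed

lemma induced_iso_pattern:
  assumes "finite S" "card S = k"
  obtains E where "graph_iso ({..<k}, E) (induced X S)"
proof -
  obtain b where b: "bij_betw b {..<k} S"
    using ex_bij_betw_nat_finite[OF assms(1)] assms(2) by (auto simp: atLeast0LessThan)
  define E where "E = {(x, y). x < k \<and> y < k \<and> (b x, b y) \<in> snd X}"
  have "graph_iso ({..<k}, E) (induced X S)"
    unfolding graph_iso_def induced_def using b bij_betw_apply[OF b] by (intro exI[of _ b]) (auto simp: E_def)
  then show ?thesis by (rule that)
qed

lemma count_deck: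
  assumes "finite (fst X)"
  shows "count (deck k X) c = card {S. S \<subseteq> fst X \<and> card S = k \<and> iso_class (induced X S) = c}"
proof -
  have fin: "finite {S. S \<subseteq> fst X \<and> card S = k}" using assms by simp
  have "count (deck k X) c = card ((\<lambda>S. iso_class (induced X S)) -` {c} \<inter> {S. S \<subseteq> fst X \<and> card S = k})"
    unfolding deck_def count_image_mset using fin by simp
  also have "(\<lambda>S. iso_class (induced X S)) -` {c} \<inter> {S. S \<subseteq> fst X \<and> card S = k}
      = {S. S \<subseteq> fst X \<and> card S = k \<and> iso_class (induced X S) = c}"
    by blast
  finally show ?thesis .
qed

lemma count_deck_pattern:
  assumes "finite (fst X)"
  shows "count (deck k X) (iso_class (({..<k}, E) :: nat graph)) = card (copies k ({..<k}, E) X)"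
proof -
  have "iso_class (induced X S) = iso_class (({..<k}, E) :: nat graph) \<longleftrightarrow>
      graph_iso ({..<k}, E) (induced X S)" for S
    by (rule iso_class_eq_iff[OF graph_iso_refl])
  then show ?thesis by (simp add: count_deck[OF assms] copies_def)
qed

lemma count_deck_non_pattern:
  assumes "finite (fst X)" and "\<forall>E. c \<noteq> iso_class (({..<k}, E) :: nat graph)"
  shows "count (deck k X) c = 0"
proof -
  have "iso_class (induced X S) \<noteq> c" if S: "S \<subseteq> fst X" "card S = k" for S
  proof -
    obtain E where "graph_iso ({..<k}, E) (induced X S)"
      using induced_iso_pattern[OF finite_subset[OF S(1) assms(1)] S(2)] by blast
    then have "iso_class (induced X S) = iso_class (({..<k}, E) :: nat graph)"
      using iso_class_eq_iff[OF graph_iso_refl] by blast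
    then show ?thesis using assms(2) by metis
  qed
  then have "{S. S \<subseteq> fst X \<and> card S = k \<and> iso_class (induced X S) = c} = {}" by blast
  then show ?thesis by (simp only: count_deck[OF assms(1)] card.empty)
qed

lemma deck_eq_if_card_embeddings_eq:
  assumes finG: "finite (fst G)" and finH: "finite (fst H)"
    and embeddings: "\<And>E. E \<subseteq> {..<k} \<times> {..<k} \<Longrightarrow> card (embeddings k E G) = card (embeddings k E H)"
  shows "deck k G = deck k H"
proof (rule multiset_eqI)
  fix c
  show "count (deck k G) c = count (deck k H) c"
  proof (cases "\<exists>E. c = iso_class (({..<k}, E) :: nat graph)")
    case True
    then obtain E where c: "c = iso_class (({..<k}, E) :: nat graph)" by blast
    have "card (embeddings k E G) = card (embeddings k E H)"
      using embeddings[of "E \<inter> {..<k} \<times> {..<k}"] by (simp add: embeddings_restrict)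
    then show ?thesis using card_copies_eq[OF finG finH] by (simp add: c count_deck_pattern finG finH)
  next
    case False
    then show ?thesis by (simp add: count_deck_non_pattern finG finH)
  qed
qed

theorem corollary3p4:
  fixes G :: "'a graph" and H :: "'b graph" and k n :: nat
  assumes "k > 0" and "n > 0"
    and "simple_graph G" and "simple_graph H"
    and "card (fst G) = n" and "card (fst H) = n"
    and "all_components_long_cycles k G" and "all_components_long_cycles k H"
  shows "deck k G = deck k H"
proof -
  have finG: "finite (fst G)" and finH: "finite (fst H)"
    using assms(3,4) by (simp_all add: simple_graph_def)
  have "card (homs j E G) = card (homs j E H)" if "j \<le> k" for j E
    using card_homs_long_cycle_components[OF assms(3,4) _ assms(7,8) that] assms(5,6) by simp
  then have "card (inj_homs k E G) = card (inj_homs k E H)" for E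
    using card_inj_homs_eq[OF finG finH] by blast
  then have "card (embeddings k E G) = card (embeddings k E H)" if "E \<subseteq> {..<k} \<times> {..<k}" for E
    using card_embeddings_eq[OF finG finH] that by blast
  then show ?thesis by (rule deck_eq_if_card_embeddings_eq[OF finG finH])
qed

end
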